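(* Let $H$ be a graph on $h$ vertices with $\chi(H)=r\geq 3$ and $\gcd(H)=1$. For every $\alpha>0$ there exists $n_0=n_0(\alpha,H)$ such that if $G$ is a balanced $r$-partite graph on $rn$ vertices with $n\geq n_0$ and $\delta^*(G)\geq \frac{r-2}{r-1}n+\alpha n$, then for every vertex $v\in V(G)$ there is a copy of $H$ in $G$ containing $v$.
   Context: For an $r$-partite graph $G$ with vertex classes $V_1,\dots,V_r$, $G$ is balanced if all classes have the same size, and $\delta^*(G)$ is the largest integer $m$ such that for all $i\neq j$ every vertex of $V_i$ has at least $m$ neighbours in $V_j$. For a graph $H$ with $\chi(H)=r$, let $\mathcal C$ be the set of proper $r$-colourings of $H$ with colour classes $X_1^\phi,\dots,X_r^\phi$, and $\mathcal D(H)=\bigcup_{\phi\in\mathcal C}\{|X_i^\phi|-|X_j^\phi|: i,j\in[r]\}$; $\gcd(H)$ is the greatest common divisor of the elements of $\mathcal D(H)$ (and $\infty$ if $\mathcal D(H)=\{0\}$). *)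

theory Defs
  imports Complex_Main
begin

definition simple_graph :: "'a set \<Rightarrow> ('a \<Rightarrow> 'a \<Rightarrow> bool) \<Rightarrow> bool" where
  "simple_graph V E \<longleftrightarrow> finite V \<and>
     (\<forall>x y. E x y \<longrightarrow> x \<in> V \<and> y \<in> V \<and> x \<noteq> y \<and> E y x)"

definition proper_colouring :: "'a set \<Rightarrow> ('a \<Rightarrow> 'a \<Rightarrow> bool) \<Rightarrow> nat \<Rightarrow> ('a \<Rightarrow> nat) \<Rightarrow> bool" where
  "proper_colouring V E k f \<longleftrightarrow> (\<forall>v\<in>V. f v < k) \<and> (\<forall>x\<in>V. \<forall>y\<in>V. E x y \<longrightarrow> f x \<noteq> f y)"

definition chromatic_number :: "'a set \<Rightarrow> ('a \<Rightarrow> 'a \<Rightarrow> bool) \<Rightarrow> nat" where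
  "chromatic_number V E = (LEAST k. \<exists>f. proper_colouring V E k f)"

definition colour_class_diffs :: "'a set \<Rightarrow> ('a \<Rightarrow> 'a \<Rightarrow> bool) \<Rightarrow> int set" where
  "colour_class_diffs V E =
     {int (card {v\<in>V. f v = i}) - int (card {v\<in>V. f v = j}) | f i j.
        proper_colouring V E (chromatic_number V E) f \<and>
        i < chromatic_number V E \<and> j < chromatic_number V E}"

text \<open>gcd(H). The paper's value \<infinity> (when D(H) = {0}) is represented by 0 = Gcd {0};
  in any case it is different from 1.\<close>
definition graph_gcd :: "'a set \<Rightarrow> ('a \<Rightarrow> 'a \<Rightarrow> bool) \<Rightarrow> int" where
  "graph_gcd V E = Gcd (colour_class_diffs V E)"

definition balanced_r_partite :: "nat \<Rightarrow> nat \<Rightarrow> 'b set \<Rightarrow> ('b \<Rightarrow> 'b \<Rightarrow> bool) \<Rightarrow> (nat \<Rightarrow> 'b set) \<Rightarrow> bool" where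
  "balanced_r_partite r n V E P \<longleftrightarrow> simple_graph V E \<and>
     (\<forall>i<r. P i \<subseteq> V \<and> card (P i) = n) \<and>
     (\<forall>i<r. \<forall>j<r. i \<noteq> j \<longrightarrow> P i \<inter> P j = {}) \<and>
     V = (\<Union>i<r. P i) \<and>
     (\<forall>i<r. \<forall>x\<in>P i. \<forall>y\<in>P i. \<not> E x y)"

definition delta_star :: "nat \<Rightarrow> ('b \<Rightarrow> 'b \<Rightarrow> bool) \<Rightarrow> (nat \<Rightarrow> 'b set) \<Rightarrow> nat" where
  "delta_star r E P = Min {card {u\<in>P j. E v u} | i j v. i < r \<and> j < r \<and> i \<noteq> j \<and> v \<in> P i}"

definition copy_containing :: "'a set \<Rightarrow> ('a \<Rightarrow> 'a \<Rightarrow> bool) \<Rightarrow> 'b set \<Rightarrow> ('b \<Rightarrow> 'b \<Rightarrow> bool) \<Rightarrow> 'b \<Rightarrow> bool" where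
  "copy_containing VH EH VG EG v \<longleftrightarrow> (\<exists>\<phi>. inj_on \<phi> VH \<and> \<phi> ` VH \<subseteq> VG \<and>
     (\<forall>x\<in>VH. \<forall>y\<in>VH. EH x y \<longrightarrow> EG (\<phi> x) (\<phi> y)) \<and> v \<in> \<phi> ` VH)"

end

theory Submission
  imports Defs "HOL-Library.FuncSet" "HOL-Combinatorics.Transposition"
begin

text \<open>Let \<open>v\<close> lie in the class \<open>V\<^sub>i\<close>. By the degree condition every vertex has at most
  \<open>m = n - \<delta>\<^sup>*(G) \<le> (1 - \<alpha>) n / (r - 1)\<close> non-neighbours in each other class. List the
  neighbourhoods of \<open>v\<close> in the \<open>r - 1\<close> other classes, followed by \<open>V\<^sub>i - {v}\<close>: the \<open>j\<close>-th
  of these layers has at least \<open>j m + \<alpha> n / 2\<close> vertices once \<open>\<alpha> n \<ge> 2\<close>. Induction on the number of layers,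
  with a Kovari--Sos--Turan pigeonhole on common neighbourhoods in the induction step, yields
  a complete \<open>r\<close>-partite graph with parts of size \<open>|V(H)|\<close>, one in each layer. Embedding a
  proper \<open>r\<close>-colouring of \<open>H\<close> into these parts, with the colour class of some \<open>x0\<close> going
  to the part inside \<open>V\<^sub>i\<close> and \<open>x0\<close> itself to \<open>v\<close>, gives a copy of \<open>H\<close> through \<open>v\<close>,
  because \<open>v\<close> is adjacent to all other parts.\<close>

definition complete_between :: "('b \<Rightarrow> 'b \<Rightarrow> bool) \<Rightarrow> 'b set \<Rightarrow> 'b set \<Rightarrow> bool" where
  "complete_between E A B \<longleftrightarrow> (\<forall>x\<in>A. \<forall>y\<in>B. E x y)"

definition contains_complete_multipartite ::
    "('b \<Rightarrow> 'b \<Rightarrow> bool) \<Rightarrow> nat \<Rightarrow> nat \<Rightarrow> (nat \<Rightarrow> 'b set) \<Rightarrow> bool" where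
  "contains_complete_multipartite E k t W \<longleftrightarrow>
     (\<exists>S. \<forall>j<k. S j \<subseteq> W j \<and> card (S j) = t \<and> (\<forall>i<j. complete_between E (S i) (S j)))"

text \<open>The term \<open>j * m\<close> in the size of layer \<open>j\<close> pays for the vertices of that layer with too
  few neighbours in one of the parts already chosen in the \<open>j\<close> earlier layers.\<close>
definition dense_layers ::
    "('b \<Rightarrow> 'b \<Rightarrow> bool) \<Rightarrow> nat \<Rightarrow> nat \<Rightarrow> real \<Rightarrow> nat \<Rightarrow> (nat \<Rightarrow> 'b set) \<Rightarrow> bool" where
  "dense_layers E k m \<epsilon> n W \<longleftrightarrow> m \<le> n \<and>
     (\<forall>j<k. finite (W j) \<and> real j * real m + \<epsilon> * real n \<le> real (card (W j))) \<and>
     (\<forall>i j u. i < j \<longrightarrow> j < k \<longrightarrow> u \<in> W i \<longrightarrow> card {w\<in>W j. \<not> E u w} \<le> m)"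

lemma complete_between_mono:
  "complete_between E A B \<Longrightarrow> A' \<subseteq> A \<Longrightarrow> B' \<subseteq> B \<Longrightarrow> complete_between E A' B'"
  unfolding complete_between_def by blast

lemma complete_between_commute:
  "symp E \<Longrightarrow> complete_between E A B \<longleftrightarrow> complete_between E B A"
  unfolding complete_between_def by (auto dest: sympD)

lemma complete_between_disjoint:
  "irreflp E \<Longrightarrow> complete_between E A B \<Longrightarrow> A \<inter> B = {}"
  unfolding complete_between_def by (auto dest: irreflpD)

lemma dense_layersD:
  assumes "dense_layers E k m \<epsilon> n W"
  shows "m \<le> n"
    and "j < k \<Longrightarrow> finite (W j)"
    and "j < k \<Longrightarrow> real j * real m + \<epsilon> * real n \<le> real (card (W j))"
    and "i < j \<Longrightarrow> j < k \<Longrightarrow> u \<in> W i \<Longrightarrow> card {w\<in>W j. \<not> E u w} \<le> m"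
  using assms unfolding dense_layers_def by auto

lemma dense_layers_Suc_imp: "dense_layers E (Suc k) m \<epsilon> n W \<Longrightarrow> dense_layers E k m \<epsilon> n W"
  unfolding dense_layers_def by auto

lemma card_filter_add_card_filter_not:
  "finite A \<Longrightarrow> card {x\<in>A. P x} + card {x\<in>A. \<not> P x} = card A"
  by (subst card_Un_disjoint[symmetric]) (auto intro: arg_cong[where f = card])

lemma sum_card_filter_swap:
  assumes "finite A" "finite B"
  shows "(\<Sum>a\<in>A. card {b\<in>B. R a b}) = (\<Sum>b\<in>B. card {a\<in>A. R a b})"
proof -
  have "(\<Sum>a\<in>A. card {b\<in>B. R a b}) = (\<Sum>a\<in>A. \<Sum>b\<in>B. if R a b then 1 else 0)"
    using assms by (simp add: sum.If_cases Int_def)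
  also have "\<dots> = (\<Sum>b\<in>B. \<Sum>a\<in>A. if R a b then 1 else 0)"
    by (rule sum.swap)
  also have "\<dots> = (\<Sum>b\<in>B. card {a\<in>A. R a b})"
    using assms by (simp add: sum.If_cases Int_def)
  finally show ?thesis .
qed

lemma card_few_neighbours_le:
  assumes "finite A" "finite S" "card S = T" "t \<le> T"
    and non_nbrs: "\<forall>u\<in>S. card {w\<in>A. \<not> E w u} \<le> m"
  shows "real (card {w\<in>A. \<not> t \<le> card {u\<in>S. E w u}}) * real (T - t + 1) \<le> real T * real m"
proof -
  let ?few = "{w\<in>A. \<not> t \<le> card {u\<in>S. E w u}}"
  have "T - t + 1 \<le> card {u\<in>S. \<not> E w u}" if "w \<in> ?few" for w
    using that card_filter_add_card_filter_not[OF \<open>finite S\<close>, of "E w"] assms(3,4) by auto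
  then have "card ?few * (T - t + 1) \<le> (\<Sum>w\<in>?few. card {u\<in>S. \<not> E w u})"
    using sum_mono[of ?few "\<lambda>_. T - t + 1"] by simp
  also have "\<dots> \<le> (\<Sum>w\<in>A. card {u\<in>S. \<not> E w u})"
    using \<open>finite A\<close> by (intro sum_mono2) auto
  also have "\<dots> = (\<Sum>u\<in>S. card {w\<in>A. \<not> E w u})"
    using assms(1,2) by (rule sum_card_filter_swap)
  also have "\<dots> \<le> T * m"
    using sum_mono[of S _ "\<lambda>_. m"] non_nbrs assms(3) by simp
  finally have "real (card ?few * (T - t + 1)) \<le> real (T * m)"
    by (simp only: of_nat_le_iff)
  then show ?thesis
    by (simp only: of_nat_mult)
qed

lemma card_le_card_filter_all_add_sum:
  fixes k :: nat
  assumes "finite A"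
  shows "card A \<le> card {x\<in>A. \<forall>j<k. P j x} + (\<Sum>j<k. card {x\<in>A. \<not> P j x})"
proof -
  have "card A \<le> card ({x\<in>A. \<forall>j<k. P j x} \<union> (\<Union>j<k. {x\<in>A. \<not> P j x}))"
    using assms by (intro card_mono) auto
  also have "\<dots> \<le> card {x\<in>A. \<forall>j<k. P j x} + card (\<Union>j<k. {x\<in>A. \<not> P j x})"
    by (rule card_Un_le)
  also have "\<dots> \<le> card {x\<in>A. \<forall>j<k. P j x} + (\<Sum>j<k. card {x\<in>A. \<not> P j x})"
    using card_UN_le[of "{..<k}"] by simp
  finally show ?thesis .
qed

lemma card_many_neighbours_in_all_ge:
  assumes "finite A" "t \<le> T" "m \<le> n"
    and S: "\<forall>j<k. finite (S j) \<and> card (S j) = T \<and> (\<forall>u\<in>S j. card {w\<in>A. \<not> E w u} \<le> m)"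
    and T_large: "2 * real k * real t \<le> \<epsilon> * real (T - t + 1)"
    and A_large: "real k * real m + \<epsilon> * real n \<le> real (card A)"
  shows "\<epsilon> * real n / 2 \<le> real (card {w\<in>A. \<forall>j<k. t \<le> card {u\<in>S j. E w u}})"
proof -
  define few where "few j = {w\<in>A. \<not> t \<le> card {u\<in>S j. E w u}}" for j
  define good where "good = {w\<in>A. \<forall>j<k. t \<le> card {u\<in>S j. E w u}}"
  define D where "D = real (T - t + 1)"
  have D_pos: "D > 0" and T_eq: "real T = D + real t - 1"
    unfolding D_def using \<open>t \<le> T\<close> by auto
  have "card A \<le> card good + (\<Sum>j<k. card (few j))"
    unfolding good_def few_def by (rule card_le_card_filter_all_add_sum[OF \<open>finite A\<close>])
  then have union: "real (card A) \<le> card good + (\<Sum>j<k. real (card (few j)))"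
    by (metis of_nat_add of_nat_le_iff of_nat_sum)
  have "D * card (few j) \<le> real T * real m" if "j < k" for j
    using card_few_neighbours_le[OF \<open>finite A\<close> _ _ \<open>t \<le> T\<close>, of "S j" E m] S that
    unfolding few_def D_def by (simp add: mult.commute)
  then have "D * (\<Sum>j<k. real (card (few j))) \<le> real k * ((D + real t - 1) * real m)"
    using sum_mono[of "{..<k}" "\<lambda>j. D * card (few j)" "\<lambda>_. real T * real m"] T_eq
    by (simp add: sum_distrib_left)
  also have "\<dots> \<le> D * (real k * real m) + real k * real t * real n"
  proof -
    have "real k * ((D + real t - 1) * real m) =
        D * (real k * real m) + real k * real t * real m - real k * real m"
      by (simp add: algebra_simps)
    moreover have "real k * real t * real m \<le> real k * real t * real n"
      using \<open>m \<le> n\<close> by (intro mult_left_mono) auto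
    moreover have "0 \<le> real k * real m"
      by simp
    ultimately show ?thesis
      by linarith
  qed
  also have "real k * real t * real n \<le> D * (\<epsilon> * real n / 2)"
    using mult_right_mono[OF T_large, of "real n"] unfolding D_def by (simp add: algebra_simps)
  finally have "D * (\<epsilon> * real n) \<le> D * (card good + \<epsilon> * real n / 2)"
    using mult_left_mono[OF union, of D] mult_left_mono[OF A_large, of D] D_pos
    by (simp add: algebra_simps)
  then show ?thesis
    using D_pos unfolding good_def by simp
qed

lemma PiE_subsets_with_card:
  assumes "\<forall>j<k. finite (S j) \<and> card (S j) = T"
  shows "finite (\<Pi>\<^sub>E j\<in>{..<k}. {Y. Y \<subseteq> S j \<and> card Y = t})"
    and "card (\<Pi>\<^sub>E j\<in>{..<k}. {Y. Y \<subseteq> S j \<and> card Y = t}) \<le> 2 ^ (T * k)"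
    and "t \<le> T \<Longrightarrow> (\<Pi>\<^sub>E j\<in>{..<k}. {Y. Y \<subseteq> S j \<and> card Y = t}) \<noteq> {}"
proof -
  have sub: "(\<Pi>\<^sub>E j\<in>{..<k}. {Y. Y \<subseteq> S j \<and> card Y = t}) \<subseteq> (\<Pi>\<^sub>E j\<in>{..<k}. Pow (S j))"
    by (rule PiE_mono) auto
  have fin: "finite (\<Pi>\<^sub>E j\<in>{..<k}. Pow (S j))"
    using assms by (intro finite_PiE) auto
  show "finite (\<Pi>\<^sub>E j\<in>{..<k}. {Y. Y \<subseteq> S j \<and> card Y = t})"
    using sub fin by (rule finite_subset)
  have "card (\<Pi>\<^sub>E j\<in>{..<k}. {Y. Y \<subseteq> S j \<and> card Y = t}) \<le> card (\<Pi>\<^sub>E j\<in>{..<k}. Pow (S j))"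
    by (rule card_mono[OF fin sub])
  also have "\<dots> = 2 ^ (T * k)"
    using assms by (simp add: card_PiE card_Pow power_mult)
  finally show "card (\<Pi>\<^sub>E j\<in>{..<k}. {Y. Y \<subseteq> S j \<and> card Y = t}) \<le> 2 ^ (T * k)" .
  assume "t \<le> T"
  then have "{Y. Y \<subseteq> S j \<and> card Y = t} \<noteq> {}" if "j < k" for j
    using assms that obtain_subset_with_card_n[of t "S j"] by auto
  then show "(\<Pi>\<^sub>E j\<in>{..<k}. {Y. Y \<subseteq> S j \<and> card Y = t}) \<noteq> {}"
    unfolding PiE_eq_empty_iff by blast
qed

text \<open>A Kovari--Sos--Turan type pigeonhole: record for each vertex of \<open>G\<close> a choice of
  \<open>t\<close> of its neighbours in every \<open>S j\<close>; there are at most \<open>2 ^ (T * k)\<close> such records.\<close>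
lemma obtain_common_neighbourhoods:
  assumes "finite G" "t \<le> T" "t * 2 ^ (T * k) \<le> card G"
    and S: "\<forall>j<k. finite (S j) \<and> card (S j) = T"
    and many_nbrs: "\<forall>w\<in>G. \<forall>j<k. t \<le> card {u\<in>S j. E w u}"
  obtains X Y where "X \<subseteq> G" "card X = t"
    "\<forall>j<k. Y j \<subseteq> S j \<and> card (Y j) = t \<and> complete_between E X (Y j)"
proof -
  define choice where
    "choice w = restrict (\<lambda>j. SOME Y. Y \<subseteq> {u\<in>S j. E w u} \<and> card Y = t) {..<k}" for w
  have choice: "choice w j \<subseteq> {u\<in>S j. E w u} \<and> card (choice w j) = t" if "w \<in> G" "j < k" for w j
  proof -
    have "\<exists>Y. Y \<subseteq> {u\<in>S j. E w u} \<and> card Y = t"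
      using many_nbrs that by (meson obtain_subset_with_card_n)
    from someI_ex[OF this] show ?thesis
      using that unfolding choice_def by simp
  qed
  define B where "B = (\<Pi>\<^sub>E j\<in>{..<k}. {Y. Y \<subseteq> S j \<and> card Y = t})"
  have "choice w \<in> B" if "w \<in> G" for w
  proof -
    have "choice w \<in> extensional {..<k}"
      unfolding choice_def by simp
    then show ?thesis
      unfolding B_def PiE_iff using choice[OF that] by blast
  qed
  then have choice_B: "choice \<in> G \<rightarrow> B"
    by blast
  have "finite B" "card B \<le> 2 ^ (T * k)" "B \<noteq> {}"
    unfolding B_def using PiE_subsets_with_card[OF S] \<open>t \<le> T\<close> by auto
  then obtain Y where "Y \<in> B" and fibre: "card G \<le> card (choice -` {Y} \<inter> G) * card B"
    using pigeonhole_card[OF choice_B \<open>finite G\<close> \<open>finite B\<close>] by blast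
  note assms(3)
  also note fibre
  also have "card (choice -` {Y} \<inter> G) * card B \<le> card (choice -` {Y} \<inter> G) * 2 ^ (T * k)"
    using \<open>card B \<le> 2 ^ (T * k)\<close> by simp
  finally have "t \<le> card (choice -` {Y} \<inter> G)"
    by simp
  then obtain X where X: "X \<subseteq> choice -` {Y} \<inter> G" "card X = t"
    by (meson obtain_subset_with_card_n)
  show ?thesis
  proof (rule that)
    show "X \<subseteq> G" "card X = t"
      using X by auto
    have "complete_between E X (Y j)" if "j < k" for j
      using X choice that unfolding complete_between_def by fastforce
    then show "\<forall>j<k. Y j \<subseteq> S j \<and> card (Y j) = t \<and> complete_between E X (Y j)"
      using \<open>Y \<in> B\<close> unfolding B_def by auto
  qed
qed

lemma contains_complete_multipartite_SucI:
  assumes "symp E"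
    and S: "\<forall>j<k. S j \<subseteq> W j \<and> (\<forall>i<j. complete_between E (S i) (S j))"
    and Y: "\<forall>j<k. Y j \<subseteq> S j \<and> card (Y j) = t \<and> complete_between E X (Y j)"
    and "X \<subseteq> W k" "card X = t"
  shows "contains_complete_multipartite E (Suc k) t W"
  unfolding contains_complete_multipartite_def
proof (intro exI[of _ "Y(k := X)"] allI impI)
  fix j assume "j < Suc k"
  show "(Y(k := X)) j \<subseteq> W j \<and> card ((Y(k := X)) j) = t \<and>
      (\<forall>i<j. complete_between E ((Y(k := X)) i) ((Y(k := X)) j))"
  proof (cases "j = k")
    case True
    then show ?thesis
      using \<open>X \<subseteq> W k\<close> \<open>card X = t\<close> Y complete_between_commute[OF \<open>symp E\<close>] by simp
  next
    case False
    then have "j < k"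
      using \<open>j < Suc k\<close> by simp
    then have "Y j \<subseteq> W j"
      using Y S by blast
    moreover have "complete_between E (Y i) (Y j)" if "i < j" for i
      using complete_between_mono[of E "S i" "S j" "Y i" "Y j"] Y S that \<open>j < k\<close> by simp
    ultimately show ?thesis
      using False \<open>j < k\<close> Y by simp
  qed
qed

lemma contains_complete_multipartite_Suc:
  assumes "symp E" "t \<le> T"
    and dense: "dense_layers E (Suc k) m \<epsilon> n W"
    and S: "\<forall>j<k. S j \<subseteq> W j \<and> card (S j) = T \<and> (\<forall>i<j. complete_between E (S i) (S j))"
    and T_large: "2 * real k * real t \<le> \<epsilon> * real (T - t + 1)"
    and n_large: "real (t * 2 ^ (T * k)) \<le> \<epsilon> * real n / 2"
  shows "contains_complete_multipartite E (Suc k) t W"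
proof -
  define good where "good = {w\<in>W k. \<forall>j<k. t \<le> card {u\<in>S j. E w u}}"
  have fin_W: "finite (W j)" if "j \<le> k" for j
    using dense_layersD(2)[OF dense] that by simp
  have S_non_nbrs: "\<forall>j<k. finite (S j) \<and> card (S j) = T \<and> (\<forall>u\<in>S j. card {w\<in>W k. \<not> E w u} \<le> m)"
  proof (intro allI impI conjI ballI)
    fix j assume "j < k"
    then have S_j: "S j \<subseteq> W j" "card (S j) = T"
      using S by auto
    then show "finite (S j)" "card (S j) = T"
      using fin_W[of j] \<open>j < k\<close> finite_subset by auto
    fix u assume "u \<in> S j"
    have "{w\<in>W k. \<not> E w u} = {w\<in>W k. \<not> E u w}"
      using \<open>symp E\<close> by (auto dest: sympD)
    then show "card {w\<in>W k. \<not> E w u} \<le> m"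
      using dense_layersD(4)[OF dense \<open>j < k\<close>] S_j \<open>u \<in> S j\<close> by auto
  qed
  have "m \<le> n" and "real k * real m + \<epsilon> * real n \<le> real (card (W k))"
    using dense_layersD(1,3)[OF dense] by auto
  then have "\<epsilon> * real n / 2 \<le> real (card good)"
    unfolding good_def
    by (rule card_many_neighbours_in_all_ge[OF fin_W[OF order_refl] \<open>t \<le> T\<close> _ S_non_nbrs T_large])
  then have good_large: "t * 2 ^ (T * k) \<le> card good"
    using n_large by linarith
  have "finite good"
    unfolding good_def using fin_W by simp
  moreover have "\<forall>j<k. finite (S j) \<and> card (S j) = T"
    using S_non_nbrs by blast
  moreover have "\<forall>w\<in>good. \<forall>j<k. t \<le> card {u\<in>S j. E w u}"
    unfolding good_def by blast
  ultimately obtain X Y where "X \<subseteq> good" "card X = t"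
    and "\<forall>j<k. Y j \<subseteq> S j \<and> card (Y j) = t \<and> complete_between E X (Y j)"
    by (rule obtain_common_neighbourhoods[OF _ \<open>t \<le> T\<close> good_large])
  moreover have "good \<subseteq> W k"
    unfolding good_def by blast
  ultimately show ?thesis
    using contains_complete_multipartite_SucI[OF \<open>symp E\<close>, of k S W Y t X] S by auto
qed

lemma dense_layers_contain_complete_multipartite:
  assumes "\<epsilon> > 0"
  shows "\<exists>N. \<forall>n\<ge>N. \<forall>(E :: 'b \<Rightarrow> 'b \<Rightarrow> bool) W m. symp E \<and> dense_layers E k m \<epsilon> n W
           \<longrightarrow> contains_complete_multipartite E k t W"
proof (induction k arbitrary: t)
  case 0
  show ?case
    unfolding contains_complete_multipartite_def by simp
next
  case (Suc k)
  define T where "T = t + nat \<lceil>2 * real k * real t / \<epsilon>\<rceil>"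
  have "t \<le> T"
    unfolding T_def by simp
  have "2 * real k * real t / \<epsilon> \<le> real (T - t + 1)"
    unfolding T_def by linarith
  then have T_large: "2 * real k * real t \<le> \<epsilon> * real (T - t + 1)"
    using assms by (simp add: divide_le_eq mult.commute)
  obtain N where N: "\<forall>n\<ge>N. \<forall>(E :: 'b \<Rightarrow> 'b \<Rightarrow> bool) W m. symp E \<and> dense_layers E k m \<epsilon> n W
      \<longrightarrow> contains_complete_multipartite E k T W"
    using Suc.IH[of T] by blast
  define N' where "N' = max N (nat \<lceil>2 * real (t * 2 ^ (T * k)) / \<epsilon>\<rceil>)"
  have "\<forall>n\<ge>N'. \<forall>(E :: 'b \<Rightarrow> 'b \<Rightarrow> bool) W m. symp E \<and> dense_layers E (Suc k) m \<epsilon> n W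
      \<longrightarrow> contains_complete_multipartite E (Suc k) t W"
  proof (intro allI impI, elim conjE)
    fix n and E :: "'b \<Rightarrow> 'b \<Rightarrow> bool" and W m
    assume "N' \<le> n" "symp E" and dense: "dense_layers E (Suc k) m \<epsilon> n W"
    then have "2 * real (t * 2 ^ (T * k)) / \<epsilon> \<le> real n"
      unfolding N'_def by linarith
    then have n_large: "real (t * 2 ^ (T * k)) \<le> \<epsilon> * real n / 2"
      using assms by (simp add: divide_le_eq mult.commute)
    obtain S where "\<forall>j<k. S j \<subseteq> W j \<and> card (S j) = T \<and> (\<forall>i<j. complete_between E (S i) (S j))"
      using N dense_layers_Suc_imp[OF dense] \<open>N' \<le> n\<close> \<open>symp E\<close>
      unfolding N'_def contains_complete_multipartite_def by fastforce
    then show "contains_complete_multipartite E (Suc k) t W"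
      by (rule contains_complete_multipartite_Suc[OF \<open>symp E\<close> \<open>t \<le> T\<close> dense _ T_large n_large])
  qed
  then show ?case
    by blast
qed

lemma simple_graph_symp: "simple_graph V E \<Longrightarrow> symp E"
  unfolding simple_graph_def by (auto intro: sympI)

lemma simple_graph_irreflp: "simple_graph V E \<Longrightarrow> irreflp E"
  unfolding simple_graph_def by (auto intro: irreflpI)

lemma balanced_r_partite_simple_graph: "balanced_r_partite r n V E P \<Longrightarrow> simple_graph V E"
  unfolding balanced_r_partite_def by blast

lemma proper_colouring_chromatic_number:
  assumes "simple_graph V E"
  shows "\<exists>f. proper_colouring V E (chromatic_number V E) f"
proof -
  obtain g where g: "bij_betw g V {0..<card V}"
    using assms ex_bij_betw_finite_nat unfolding simple_graph_def by blast
  have "proper_colouring V E (card V) g"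
    unfolding proper_colouring_def
  proof (intro conjI ballI impI)
    show "g x < card V" if "x \<in> V" for x
      using g that by (auto simp: bij_betw_def)
    fix x y assume "x \<in> V" "y \<in> V" "E x y"
    then have "x \<noteq> y"
      using assms unfolding simple_graph_def by blast
    then show "g x \<noteq> g y"
      using g \<open>x \<in> V\<close> \<open>y \<in> V\<close> by (auto simp: bij_betw_def inj_on_def)
  qed
  then have "\<exists>k f. proper_colouring V E k f"
    by blast
  then show ?thesis
    unfolding chromatic_number_def by (rule LeastI_ex)
qed

lemma chromatic_number_pos_imp_nonempty:
  assumes "0 < chromatic_number V E"
  shows "V \<noteq> {}"
proof
  assume "V = {}"
  then have "proper_colouring V E 0 f" for f
    unfolding proper_colouring_def by simp
  then have "chromatic_number V E = 0"
    unfolding chromatic_number_def by (blast intro: Least_eq_0)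
  with assms show False
    by simp
qed

lemma balanced_r_partite_classD:
  assumes "balanced_r_partite r n V E P" "j < r"
  shows "finite (P j)" "card (P j) = n" "P j \<subseteq> V"
  using assms finite_subset unfolding balanced_r_partite_def simple_graph_def by auto

lemma delta_star_le_card_neighbours:
  assumes B: "balanced_r_partite r n V E P" and "i < r" "j < r" "i \<noteq> j" "u \<in> P i"
  shows "delta_star r E P \<le> card {w\<in>P j. E u w}"
proof -
  let ?degrees = "{card {w\<in>P j. E v w} | i j v. i < r \<and> j < r \<and> i \<noteq> j \<and> v \<in> P i}"
  have "card {w\<in>P j'. E v w} \<le> n" if "j' < r" for j' v
    using balanced_r_partite_classD(1,2)[OF B that] card_mono[of "P j'" "{w\<in>P j'. E v w}"] by auto
  then have "?degrees \<subseteq> {..n}"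
    by auto
  then have "finite ?degrees"
    using finite_subset by blast
  moreover have "card {w\<in>P j. E u w} \<in> ?degrees"
    using assms by blast
  ultimately show ?thesis
    unfolding delta_star_def by (rule Min_le)
qed

lemma card_non_neighbours_le:
  assumes "balanced_r_partite r n V E P" "i < r" "j < r" "i \<noteq> j" "u \<in> P i"
  shows "delta_star r E P \<le> n" "card {w\<in>P j. \<not> E u w} \<le> n - delta_star r E P"
proof -
  have "card {w\<in>P j. E u w} + card {w\<in>P j. \<not> E u w} = n"
    using balanced_r_partite_classD[OF assms(1,3)] card_filter_add_card_filter_not by metis
  moreover have "delta_star r E P \<le> card {w\<in>P j. E u w}"
    by (rule delta_star_le_card_neighbours[OF assms])
  ultimately show "delta_star r E P \<le> n" "card {w\<in>P j. \<not> E u w} \<le> n - delta_star r E P"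
    by linarith+
qed

lemma real_non_degree_le:
  fixes r n :: nat and d \<alpha> :: real
  assumes "2 \<le> r" "0 \<le> \<alpha>" "(real r - 2) / (real r - 1) * real n + \<alpha> * real n \<le> d"
  shows "(real r - 1) * (real n - d) \<le> real n - \<alpha> * real n"
proof -
  have "real r - 1 > 0"
    using assms(1) by simp
  then have "(real r - 1) * ((real r - 2) / (real r - 1) * real n + \<alpha> * real n) =
      (real r - 2) * real n + (real r - 1) * (\<alpha> * real n)"
    by (simp add: distrib_left)
  moreover have "(real r - 1) * ((real r - 2) / (real r - 1) * real n + \<alpha> * real n) \<le> (real r - 1) * d"
    using assms by (intro mult_left_mono) auto
  moreover have "1 * (\<alpha> * real n) \<le> (real r - 1) * (\<alpha> * real n)"
    using assms(1,2) by (intro mult_right_mono) auto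
  ultimately show ?thesis
    by (simp add: algebra_simps)
qed

text \<open>The class of \<open>v\<close> goes last: it is the layer with the largest guaranteed size, and the
  size requirement of \<^const>\<open>dense_layers\<close> grows with the index.\<close>
definition neighbourhood_layers ::
    "nat \<Rightarrow> ('b \<Rightarrow> 'b \<Rightarrow> bool) \<Rightarrow> (nat \<Rightarrow> 'b set) \<Rightarrow> nat \<Rightarrow> 'b \<Rightarrow> nat \<Rightarrow> 'b set" where
  "neighbourhood_layers r E P i v j =
     (if j = r - 1 then P i - {v} else {u\<in>P (transpose i (r - 1) j). E v u})"

lemma neighbourhood_layers_subset:
  "neighbourhood_layers r E P i v j \<subseteq> P (transpose i (r - 1) j)"
  unfolding neighbourhood_layers_def by auto

lemma transpose_less:
  fixes a b c r :: nat
  shows "a < r \<Longrightarrow> b < r \<Longrightarrow> c < r \<Longrightarrow> transpose a b c < r"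
  unfolding transpose_def by auto

lemma neighbourhood_layers_card:
  assumes B: "balanced_r_partite r n V E P" and "i < r" "v \<in> P i" "j < r"
  shows "finite (neighbourhood_layers r E P i v j)"
    and "j = r - 1 \<Longrightarrow> card (neighbourhood_layers r E P i v j) = n - 1"
    and "j \<noteq> r - 1 \<Longrightarrow> delta_star r E P \<le> card (neighbourhood_layers r E P i v j)"
proof -
  have "transpose i (r - 1) j < r"
    using \<open>i < r\<close> \<open>j < r\<close> by (simp add: transpose_less)
  then show "finite (neighbourhood_layers r E P i v j)"
    using neighbourhood_layers_subset[of r E P i v j] balanced_r_partite_classD(1)[OF B]
    by (blast intro: finite_subset)
  show "card (neighbourhood_layers r E P i v j) = n - 1" if "j = r - 1"
    using balanced_r_partite_classD[OF B \<open>i < r\<close>] \<open>v \<in> P i\<close> that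
    unfolding neighbourhood_layers_def by simp
  show "delta_star r E P \<le> card (neighbourhood_layers r E P i v j)" if "j \<noteq> r - 1"
  proof -
    have "transpose i (r - 1) j \<noteq> i"
      using that by (auto simp: transpose_eq_iff)
    moreover have "transpose i (r - 1) j < r"
      using \<open>i < r\<close> \<open>j < r\<close> by (simp add: transpose_less)
    ultimately have "transpose i (r - 1) j < r" "i \<noteq> transpose i (r - 1) j"
      by auto
    from delta_star_le_card_neighbours[OF B \<open>i < r\<close> this \<open>v \<in> P i\<close>] that show ?thesis
      unfolding neighbourhood_layers_def by simp
  qed
qed

lemma neighbourhood_layers_non_neighbours:
  assumes B: "balanced_r_partite r n V E P" and "i < r" "a < b" "b < r"
    and "u \<in> neighbourhood_layers r E P i v a"
  shows "card {w\<in>neighbourhood_layers r E P i v b. \<not> E u w} \<le> n - delta_star r E P"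
proof -
  define \<rho> where "\<rho> = transpose i (r - 1)"
  have \<rho>_less: "\<rho> a < r" "\<rho> b < r" and "\<rho> a \<noteq> \<rho> b"
    unfolding \<rho>_def using assms(2-4) transpose_eq_imp_eq[of i "r - 1" a b] by (auto simp: transpose_less)
  have "u \<in> P (\<rho> a)"
    using neighbourhood_layers_subset[of r E P i v a] \<open>u \<in> neighbourhood_layers r E P i v a\<close>
    unfolding \<rho>_def by blast
  have "card {w\<in>neighbourhood_layers r E P i v b. \<not> E u w} \<le> card {w\<in>P (\<rho> b). \<not> E u w}"
    using neighbourhood_layers_subset[of r E P i v b] balanced_r_partite_classD(1)[OF B \<rho>_less(2)]
    unfolding \<rho>_def by (intro card_mono) auto
  also have "\<dots> \<le> n - delta_star r E P"
    by (rule card_non_neighbours_le(2)[OF B \<rho>_less \<open>\<rho> a \<noteq> \<rho> b\<close> \<open>u \<in> P (\<rho> a)\<close>])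
  finally show ?thesis .
qed

lemma neighbourhood_layers_dense:
  assumes B: "balanced_r_partite r n V E P" and "2 \<le> r" "i < r" "v \<in> P i"
    and "\<alpha> > 0" "2 \<le> \<alpha> * real n"
    and min_deg: "(real r - 2) / (real r - 1) * real n + \<alpha> * real n \<le> real (delta_star r E P)"
  shows "dense_layers E r (n - delta_star r E P) (\<alpha> / 2) n (neighbourhood_layers r E P i v)"
proof -
  define W where "W = neighbourhood_layers r E P i v"
  define m where "m = n - delta_star r E P"
  define j0 where "j0 = transpose i (r - 1) 0"
  have "j0 < r" "j0 \<noteq> i"
    unfolding j0_def using \<open>2 \<le> r\<close> \<open>i < r\<close> by (auto simp: transpose_less transpose_eq_iff)
  then have "delta_star r E P \<le> n"
    using card_non_neighbours_le(1)[OF B \<open>i < r\<close> _ _ \<open>v \<in> P i\<close>] by simp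
  then have m_real: "real m = real n - real (delta_star r E P)"
    unfolding m_def by simp
  have m_bound: "(real r - 1) * real m \<le> real n - \<alpha> * real n"
    unfolding m_real using real_non_degree_le[OF \<open>2 \<le> r\<close> _ min_deg] \<open>\<alpha> > 0\<close> by simp
  have size: "real j * real m + \<alpha> / 2 * real n \<le> real (card (W j))" if "j < r" for j
  proof (cases "j = r - 1")
    case True
    then show ?thesis
      using neighbourhood_layers_card(2)[OF B \<open>i < r\<close> \<open>v \<in> P i\<close> that] m_bound
        \<open>2 \<le> \<alpha> * real n\<close> \<open>2 \<le> r\<close>
      unfolding W_def by (simp add: of_nat_diff)
  next
    case False
    then have "real m + real (card (W j)) \<ge> real n"
      using neighbourhood_layers_card(3)[OF B \<open>i < r\<close> \<open>v \<in> P i\<close> that] m_real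
      unfolding W_def by linarith
    moreover have "real j * real m \<le> (real r - 2) * real m"
      using False that by (intro mult_right_mono) auto
    ultimately show ?thesis
      using m_bound \<open>2 \<le> \<alpha> * real n\<close> by (simp add: algebra_simps)
  qed
  have "finite (W j)" if "j < r" for j
    unfolding W_def by (rule neighbourhood_layers_card(1)[OF B \<open>i < r\<close> \<open>v \<in> P i\<close> that])
  moreover have "m \<le> n"
    unfolding m_def by simp
  moreover have "card {w\<in>W b. \<not> E u w} \<le> m" if "a < b" "b < r" "u \<in> W a" for a b u
    using neighbourhood_layers_non_neighbours[OF B \<open>i < r\<close> that[unfolded W_def]]
    unfolding W_def m_def .
  ultimately show ?thesis
    using size unfolding dense_layers_def W_def[symmetric] m_def[symmetric] by blast
qed

lemma obtain_injections_into:
  assumes "\<forall>c\<in>I. finite (A c) \<and> finite (B c) \<and> card (A c) \<le> card (B c)"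
  obtains g where "\<forall>c\<in>I. inj_on (g c) (A c) \<and> g c ` A c \<subseteq> B c"
proof -
  have "\<forall>c\<in>I. \<exists>h. h ` A c \<subseteq> B c \<and> inj_on h (A c)"
    using assms card_le_inj by blast
  then show ?thesis
    using that by (metis bchoice)
qed

lemma inj_on_fun_upd_into_insert:
  assumes "inj_on g A" "g ` A \<subseteq> B" "v \<notin> B"
  shows "inj_on (g(x := v)) A" "g(x := v) ` A \<subseteq> insert v B"
proof -
  have "v \<notin> g ` A"
    using assms(2,3) by blast
  then show "inj_on (g(x := v)) A"
    using assms(1) by (rule inj_on_fun_updI[rotated])
  show "g(x := v) ` A \<subseteq> insert v B"
    using assms(2) by (auto simp: fun_upd_image)
qed

lemma complete_between_insert:
  "complete_between E (insert x A) B \<longleftrightarrow> (\<forall>y\<in>B. E x y) \<and> complete_between E A B"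
  unfolding complete_between_def by blast

lemma pairwise_complete_fun_upd_insert:
  assumes "symp E" "c0 < r"
    and complete: "\<forall>a<r. \<forall>b<r. a \<noteq> b \<longrightarrow> complete_between E (X a) (X b)"
    and v_adj: "\<forall>c<r. c \<noteq> c0 \<longrightarrow> (\<forall>u\<in>X c. E v u)"
  shows "\<forall>a<r. \<forall>b<r. a \<noteq> b \<longrightarrow>
    complete_between E ((X(c0 := insert v (X c0))) a) ((X(c0 := insert v (X c0))) b)"
proof (intro allI impI)
  fix a b assume ab: "a < r" "b < r" "a \<noteq> b"
  have c0_complete: "complete_between E (insert v (X c0)) (X c)" if "c < r" "c \<noteq> c0" for c
    using complete v_adj \<open>c0 < r\<close> that by (simp add: complete_between_insert)
  consider "a = c0" | "b = c0" | "a \<noteq> c0" "b \<noteq> c0"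
    by blast
  then show "complete_between E ((X(c0 := insert v (X c0))) a) ((X(c0 := insert v (X c0))) b)"
  proof cases
    case 1
    then show ?thesis
      using c0_complete ab by simp
  next
    case 2
    then show ?thesis
      using c0_complete[of a] ab complete_between_commute[OF \<open>symp E\<close>] by simp
  next
    case 3
    then show ?thesis
      using complete ab by simp
  qed
qed

lemma copy_containing_from_colour_class_maps:
  assumes "irreflp EG" and f: "proper_colouring VH EH r f" and "x0 \<in> VH"
    and h: "\<forall>c<r. inj_on (h c) {x\<in>VH. f x = c} \<and> h c ` {x\<in>VH. f x = c} \<subseteq> Z c \<and> Z c \<subseteq> VG"
    and complete: "\<forall>a<r. \<forall>b<r. a \<noteq> b \<longrightarrow> complete_between EG (Z a) (Z b)"
  shows "copy_containing VH EH VG EG (h (f x0) x0)"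
proof -
  define \<phi> where "\<phi> x = h (f x) x" for x
  have f_less: "f x < r" if "x \<in> VH" for x
    using f that unfolding proper_colouring_def by blast
  have \<phi>_Z: "\<phi> x \<in> Z (f x)" if "x \<in> VH" for x
    using h f_less[OF that] that unfolding \<phi>_def by blast
  have "inj_on \<phi> VH"
  proof (rule inj_onI)
    fix x y assume "x \<in> VH" "y \<in> VH" and eq: "\<phi> x = \<phi> y"
    show "x = y"
    proof (cases "f x = f y")
      case True
      then show ?thesis
        using h f_less[OF \<open>x \<in> VH\<close>] eq \<open>x \<in> VH\<close> \<open>y \<in> VH\<close> unfolding \<phi>_def by (auto dest: inj_onD)
    next
      case False
      then have "Z (f x) \<inter> Z (f y) = {}"
        using complete f_less[OF \<open>x \<in> VH\<close>] f_less[OF \<open>y \<in> VH\<close>]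
        by (intro complete_between_disjoint[OF \<open>irreflp EG\<close>]) blast
      then show ?thesis
        using eq \<phi>_Z[OF \<open>x \<in> VH\<close>] \<phi>_Z[OF \<open>y \<in> VH\<close>] by auto
    qed
  qed
  moreover have "EG (\<phi> x) (\<phi> y)" if "x \<in> VH" "y \<in> VH" "EH x y" for x y
  proof -
    have "f x \<noteq> f y"
      using f that unfolding proper_colouring_def by blast
    then show ?thesis
      using complete f_less that \<phi>_Z unfolding complete_between_def by blast
  qed
  moreover have "\<phi> ` VH \<subseteq> VG"
    using \<phi>_Z h f_less by blast
  moreover have "h (f x0) x0 \<in> \<phi> ` VH"
    using \<open>x0 \<in> VH\<close> unfolding \<phi>_def by blast
  ultimately show ?thesis
    unfolding copy_containing_def by blast
qed

text \<open>The colour class of \<open>x0\<close> is embedded into \<open>insert v (X (f x0))\<close>, with \<open>x0\<close> sent to \<open>v\<close>.\<close>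
lemma copy_containing_from_complete_multipartite:
  assumes G: "simple_graph VG EG" and "finite VH" and f: "proper_colouring VH EH r f"
    and "x0 \<in> VH" "v \<in> VG"
    and X: "\<forall>c<r. finite (X c) \<and> card VH \<le> card (X c) \<and> X c \<subseteq> VG"
    and complete: "\<forall>a<r. \<forall>b<r. a \<noteq> b \<longrightarrow> complete_between EG (X a) (X b)"
    and v_adj: "\<forall>c<r. c \<noteq> f x0 \<longrightarrow> (\<forall>u\<in>X c. EG v u)"
    and "v \<notin> X (f x0)"
  shows "copy_containing VH EH VG EG v"
proof -
  define c0 where "c0 = f x0"
  have "c0 < r"
    using f \<open>x0 \<in> VH\<close> unfolding proper_colouring_def c0_def by blast
  have "\<forall>c\<in>{..<r}. finite {x\<in>VH. f x = c} \<and> finite (X c) \<and> card {x\<in>VH. f x = c} \<le> card (X c)"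
    using X \<open>finite VH\<close> card_mono[OF \<open>finite VH\<close>, of "{x\<in>VH. f x = _}"] by (auto intro: le_trans)
  then obtain g where g: "\<forall>c\<in>{..<r}. inj_on (g c) {x\<in>VH. f x = c} \<and> g c ` {x\<in>VH. f x = c} \<subseteq> X c"
    by (rule obtain_injections_into)
  define h where "h = g(c0 := (g c0)(x0 := v))"
  define Z where "Z = X(c0 := insert v (X c0))"
  have "\<forall>c<r. inj_on (h c) {x\<in>VH. f x = c} \<and> h c ` {x\<in>VH. f x = c} \<subseteq> Z c \<and> Z c \<subseteq> VG"
  proof (intro allI impI)
    fix c assume "c < r"
    show "inj_on (h c) {x\<in>VH. f x = c} \<and> h c ` {x\<in>VH. f x = c} \<subseteq> Z c \<and> Z c \<subseteq> VG"
    proof (cases "c = c0")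
      case True
      have "inj_on (g c0) {x\<in>VH. f x = c0}" "g c0 ` {x\<in>VH. f x = c0} \<subseteq> X c0" "v \<notin> X c0"
        using g \<open>c0 < r\<close> \<open>v \<notin> X (f x0)\<close> unfolding c0_def by auto
      from inj_on_fun_upd_into_insert[OF this, of x0] show ?thesis
        using True X \<open>c0 < r\<close> \<open>v \<in> VG\<close> unfolding h_def Z_def by simp
    next
      case False
      then show ?thesis
        using g X \<open>c < r\<close> unfolding h_def Z_def by simp
    qed
  qed
  moreover have "\<forall>a<r. \<forall>b<r. a \<noteq> b \<longrightarrow> complete_between EG (Z a) (Z b)"
    unfolding Z_def
    by (rule pairwise_complete_fun_upd_insert[OF simple_graph_symp[OF G] \<open>c0 < r\<close> complete])
      (use v_adj in \<open>simp add: c0_def\<close>)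
  ultimately have "copy_containing VH EH VG EG (h (f x0) x0)"
    by (rule copy_containing_from_colour_class_maps[OF simple_graph_irreflp[OF G] f \<open>x0 \<in> VH\<close>])
  then show ?thesis
    unfolding h_def c0_def by simp
qed

lemma contains_complete_multipartite_pairwise:
  assumes "symp E" "contains_complete_multipartite E k t W"
  obtains S where "\<forall>j<k. S j \<subseteq> W j \<and> card (S j) = t"
    and "\<forall>a<k. \<forall>b<k. a \<noteq> b \<longrightarrow> complete_between E (S a) (S b)"
proof -
  obtain S where S: "\<forall>j<k. S j \<subseteq> W j \<and> card (S j) = t \<and> (\<forall>i<j. complete_between E (S i) (S j))"
    using assms(2) unfolding contains_complete_multipartite_def by blast
  have "complete_between E (S a) (S b)" if "a < k" "b < k" "a \<noteq> b" for a b
  proof (cases "a < b")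
    case True
    then show ?thesis
      using S that by blast
  next
    case False
    then have "b < a"
      using \<open>a \<noteq> b\<close> by simp
    then have "complete_between E (S b) (S a)"
      using S \<open>a < k\<close> by blast
    then show ?thesis
      using complete_between_commute[OF \<open>symp E\<close>] by blast
  qed
  moreover have "\<forall>j<k. S j \<subseteq> W j \<and> card (S j) = t"
    using S by blast
  ultimately show ?thesis
    using that by blast
qed

lemma neighbourhood_layers_complete_multipartite:
  assumes B: "balanced_r_partite r n VG EG P" and "i < r" "v \<in> P i"
    and "contains_complete_multipartite EG r t (neighbourhood_layers r EG P i v)"
  obtains S where "\<forall>j<r. finite (S j) \<and> card (S j) = t \<and> S j \<subseteq> VG"
    and "\<forall>a<r. \<forall>b<r. a \<noteq> b \<longrightarrow> complete_between EG (S a) (S b)"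
    and "\<forall>j<r. j \<noteq> r - 1 \<longrightarrow> (\<forall>u\<in>S j. EG v u)"
    and "v \<notin> S (r - 1)"
proof -
  obtain S where S: "\<forall>j<r. S j \<subseteq> neighbourhood_layers r EG P i v j \<and> card (S j) = t"
    and "\<forall>a<r. \<forall>b<r. a \<noteq> b \<longrightarrow> complete_between EG (S a) (S b)"
    using contains_complete_multipartite_pairwise[OF
        simple_graph_symp[OF balanced_r_partite_simple_graph[OF B]] assms(4)]
    by blast
  moreover have "\<forall>j<r. finite (S j) \<and> card (S j) = t \<and> S j \<subseteq> VG"
  proof (intro allI impI)
    fix j assume "j < r"
    then have "transpose i (r - 1) j < r"
      using \<open>i < r\<close> by (simp add: transpose_less)
    note P = balanced_r_partite_classD(1,3)[OF B this]
    have "S j \<subseteq> P (transpose i (r - 1) j)"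
      using S \<open>j < r\<close> neighbourhood_layers_subset[of r EG P i v j] by blast
    then show "finite (S j) \<and> card (S j) = t \<and> S j \<subseteq> VG"
      using finite_subset[OF _ P(1)] order_trans[OF _ P(2)] S \<open>j < r\<close> by simp
  qed
  moreover have "\<forall>j<r. j \<noteq> r - 1 \<longrightarrow> (\<forall>u\<in>S j. EG v u)"
  proof (intro allI impI)
    fix j assume "j < r" "j \<noteq> r - 1"
    then have "neighbourhood_layers r EG P i v j \<subseteq> {u. EG v u}"
      unfolding neighbourhood_layers_def by auto
    then show "\<forall>u\<in>S j. EG v u"
      using S \<open>j < r\<close> by blast
  qed
  moreover have "v \<notin> S (r - 1)"
  proof -
    have "r - 1 < r"
      using \<open>i < r\<close> by simp
    then have "S (r - 1) \<subseteq> P i - {v}"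
      using S[rule_format, of "r - 1"] by (simp add: neighbourhood_layers_def)
    then show ?thesis
      by blast
  qed
  ultimately show ?thesis
    using that by blast
qed

lemma copy_containing_via_neighbourhood_layers:
  assumes B: "balanced_r_partite r n VG EG P" and "i < r" "v \<in> P i"
    and "finite VH" "proper_colouring VH EH r f" "x0 \<in> VH"
    and "contains_complete_multipartite EG r (card VH) (neighbourhood_layers r EG P i v)"
  shows "copy_containing VH EH VG EG v"
proof -
  obtain S where S: "\<forall>j<r. finite (S j) \<and> card (S j) = card VH \<and> S j \<subseteq> VG"
    and S_complete: "\<forall>a<r. \<forall>b<r. a \<noteq> b \<longrightarrow> complete_between EG (S a) (S b)"
    and S_adj: "\<forall>j<r. j \<noteq> r - 1 \<longrightarrow> (\<forall>u\<in>S j. EG v u)" and "v \<notin> S (r - 1)"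
    by (rule neighbourhood_layers_complete_multipartite[OF B \<open>i < r\<close> \<open>v \<in> P i\<close> assms(7)])
  define \<tau> where "\<tau> = transpose (f x0) (r - 1)"
  have "f x0 < r"
    using assms(5,6) unfolding proper_colouring_def by blast
  then have \<tau>_less: "\<tau> c < r" if "c < r" for c
    unfolding \<tau>_def using that by (simp add: transpose_less)
  show ?thesis
  proof (rule copy_containing_from_complete_multipartite[OF balanced_r_partite_simple_graph[OF B]
        \<open>finite VH\<close> assms(5,6), where X = "S \<circ> \<tau>"])
    show "v \<in> VG"
      using balanced_r_partite_classD(3)[OF B \<open>i < r\<close>] \<open>v \<in> P i\<close> by blast
    show "\<forall>c<r. finite ((S \<circ> \<tau>) c) \<and> card VH \<le> card ((S \<circ> \<tau>) c) \<and> (S \<circ> \<tau>) c \<subseteq> VG"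
      using S \<tau>_less by simp
    show "\<forall>a<r. \<forall>b<r. a \<noteq> b \<longrightarrow> complete_between EG ((S \<circ> \<tau>) a) ((S \<circ> \<tau>) b)"
    proof (intro allI impI)
      fix a b assume "a < r" "b < r" "a \<noteq> b"
      then have "\<tau> a \<noteq> \<tau> b"
        unfolding \<tau>_def using transpose_eq_imp_eq[of "f x0" "r - 1" a b] by auto
      then show "complete_between EG ((S \<circ> \<tau>) a) ((S \<circ> \<tau>) b)"
        using S_complete \<tau>_less[OF \<open>a < r\<close>] \<tau>_less[OF \<open>b < r\<close>] by simp
    qed
    show "\<forall>c<r. c \<noteq> f x0 \<longrightarrow> (\<forall>u\<in>(S \<circ> \<tau>) c. EG v u)"
    proof (intro allI impI)
      fix c assume "c < r" "c \<noteq> f x0"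
      then have "\<tau> c \<noteq> r - 1"
        unfolding \<tau>_def by (auto simp: transpose_eq_iff)
      then show "\<forall>u\<in>(S \<circ> \<tau>) c. EG v u"
        using S_adj \<tau>_less[OF \<open>c < r\<close>] by simp
    qed
    show "v \<notin> (S \<circ> \<tau>) (f x0)"
      using \<open>v \<notin> S (r - 1)\<close> unfolding \<tau>_def by simp
  qed
qed

lemma copy_containing_at_every_vertex:
  assumes "finite VH" "proper_colouring VH EH r f" "x0 \<in> VH" "2 \<le> r" "\<alpha> > 0"
  shows "\<exists>n0. \<forall>n\<ge>n0. \<forall>(VG :: 'b set) EG P.
           balanced_r_partite r n VG EG P \<and>
           real (delta_star r EG P) \<ge> (real r - 2) / (real r - 1) * real n + \<alpha> * real n
           \<longrightarrow> (\<forall>v\<in>VG. copy_containing VH EH VG EG v)"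
proof -
  obtain N where N: "\<forall>n\<ge>N. \<forall>(E :: 'b \<Rightarrow> 'b \<Rightarrow> bool) W m. symp E \<and> dense_layers E r m (\<alpha> / 2) n W
      \<longrightarrow> contains_complete_multipartite E r (card VH) W"
    using dense_layers_contain_complete_multipartite[where \<epsilon> = "\<alpha> / 2" and k = r and t = "card VH"]
      \<open>\<alpha> > 0\<close> by auto
  show ?thesis
  proof (intro exI[of _ "max N (nat \<lceil>2 / \<alpha>\<rceil>)"] allI impI ballI, elim conjE)
    fix n and VG :: "'b set" and EG P v
    assume n: "max N (nat \<lceil>2 / \<alpha>\<rceil>) \<le> n" and B: "balanced_r_partite r n VG EG P" and "v \<in> VG"
      and min_deg: "(real r - 2) / (real r - 1) * real n + \<alpha> * real n \<le> real (delta_star r EG P)"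
    obtain i where "i < r" "v \<in> P i"
      using B \<open>v \<in> VG\<close> unfolding balanced_r_partite_def by blast
    have "2 / \<alpha> \<le> real n"
      using n by linarith
    then have "2 \<le> \<alpha> * real n"
      using \<open>\<alpha> > 0\<close> by (simp add: divide_le_eq mult.commute)
    then have "dense_layers EG r (n - delta_star r EG P) (\<alpha> / 2) n (neighbourhood_layers r EG P i v)"
      by (rule neighbourhood_layers_dense[OF B \<open>2 \<le> r\<close> \<open>i < r\<close> \<open>v \<in> P i\<close> \<open>\<alpha> > 0\<close> _ min_deg])
    moreover have "symp EG"
      by (rule simple_graph_symp[OF balanced_r_partite_simple_graph[OF B]])
    ultimately have "contains_complete_multipartite EG r (card VH) (neighbourhood_layers r EG P i v)"
      using N[rule_format, of n EG] n by simp
    then show "copy_containing VH EH VG EG v"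
      by (rule copy_containing_via_neighbourhood_layers[OF B \<open>i < r\<close> \<open>v \<in> P i\<close> assms(1-3)])
  qed
qed

theorem proposition2p6:
  fixes VH :: "'a set" and EH :: "'a \<Rightarrow> 'a \<Rightarrow> bool" and r :: nat
  assumes "simple_graph VH EH"
    and "chromatic_number VH EH = r" and "r \<ge> 3"
    and "graph_gcd VH EH = 1"
  shows "\<forall>\<alpha>::real. \<alpha> > 0 \<longrightarrow> (\<exists>n0::nat. \<forall>n \<ge> n0. \<forall>(VG::nat set) EG P.
           balanced_r_partite r n VG EG P \<and>
           real (delta_star r EG P) \<ge> (real r - 2) / (real r - 1) * real n + \<alpha> * real n
           \<longrightarrow> (\<forall>v\<in>VG. copy_containing VH EH VG EG v))"
proof -
  have "finite VH"
    using assms(1) unfolding simple_graph_def by blast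
  obtain f where f: "proper_colouring VH EH r f"
    using proper_colouring_chromatic_number[OF assms(1)] assms(2) by blast
  obtain x0 where "x0 \<in> VH"
    using chromatic_number_pos_imp_nonempty[of VH EH] assms(2,3) by fastforce
  have "2 \<le> r"
    using assms(3) by simp
  show ?thesis
    by (intro allI impI) (rule copy_containing_at_every_vertex[OF \<open>finite VH\<close> f \<open>x0 \<in> VH\<close> \<open>2 \<le> r\<close>])
qed

end
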